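(* Let $w$ be a word and let $v_x, v_y$ be vertices of $G(w)$ with $\mathrm{dist}(v_x, v_y) = d$. Let $\chi_i$ denote the index of the $i$-th occurrence of $x$ in $w$ and $\gamma_j$ the index of the $j$-th occurrence of $y$ in $w$. Then for every $i$ such that $\gamma_i$ exists: if $\chi_{i-d}$ exists then $\chi_{i-d} \le \gamma_i$, and if $\chi_{i+d}$ exists then $\gamma_i \le \chi_{i+d}$.
   Context: For a set of symbols $\mathcal S$, $\pi_{\mathcal S}(w)$ is the subsequence of $w$ consisting of all occurrences of symbols in $\mathcal S$. Symbols $x,y$ alternate in $w$ if $\pi_{\{x,y\}}(w) \in \{(xy)^k, (xy)^kx, (yx)^k, (yx)^ky : k \ge 0\}$. $G(w)$ has one vertex $v_a$ per symbol $a$ of the alphabet and undirected edge $(v_x,v_y)$ iff $x\neq y$ alternate in $w$; $\mathrm{dist}$ is the shortest-path distance in $G(w)$. *)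

theory Defs
  imports Main "HOL-Library.Extended_Nat"
begin

definition proj :: "'a set \<Rightarrow> 'a list \<Rightarrow> 'a list" where
  "proj S w = filter (\<lambda>c. c \<in> S) w"

definition altpow :: "'a \<Rightarrow> 'a \<Rightarrow> nat \<Rightarrow> 'a list" where
  "altpow x y k = concat (replicate k [x, y])"

definition alternate :: "'a list \<Rightarrow> 'a \<Rightarrow> 'a \<Rightarrow> bool" where
  "alternate w x y \<longleftrightarrow> (\<exists>k. proj {x, y} w \<in>
     {altpow x y k, altpow x y k @ [x], altpow y x k, altpow y x k @ [y]})"

text \<open>Edge relation of the alternation graph G(w) over the alphabet \<Sigma>
  (vertices are identified with the symbols of \<Sigma>).\<close>
definition alt_edge :: "'a set \<Rightarrow> 'a list \<Rightarrow> 'a \<Rightarrow> 'a \<Rightarrow> bool" where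
  "alt_edge \<Sigma> w x y \<longleftrightarrow> x \<in> \<Sigma> \<and> y \<in> \<Sigma> \<and> x \<noteq> y \<and> alternate w x y"

definition alt_walk :: "'a set \<Rightarrow> 'a list \<Rightarrow> 'a \<Rightarrow> 'a \<Rightarrow> nat \<Rightarrow> bool" where
  "alt_walk \<Sigma> w x y n \<longleftrightarrow> (\<exists>ps. length ps = Suc n \<and> hd ps = x \<and> last ps = y \<and>
      set ps \<subseteq> \<Sigma> \<and> (\<forall>i<n. alt_edge \<Sigma> w (ps ! i) (ps ! Suc i)))"

definition alt_dist :: "'a set \<Rightarrow> 'a list \<Rightarrow> 'a \<Rightarrow> 'a \<Rightarrow> enat" where
  "alt_dist \<Sigma> w x y = (if \<exists>n. alt_walk \<Sigma> w x y n
      then enat (LEAST n. alt_walk \<Sigma> w x y n) else \<infinity>)"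

text \<open>Positions (0-based) of the occurrences of x in w, in increasing order;
  the i-th occurrence (1-based) is at position occs w x ! (i - 1).\<close>
definition occs :: "'a list \<Rightarrow> 'a \<Rightarrow> nat list" where
  "occs w x = filter (\<lambda>p. w ! p = x) [0..<length w]"

end

theory Submission
  imports Defs
begin

text \<open>Consecutive vertices of a walk alternate in \<open>w\<close>, so in every prefix of \<open>w\<close> their numbers
  of occurrences differ by at most one; along a walk of length \<open>d\<close> from \<open>x\<close> to \<open>y\<close> the counts of
  \<open>x\<close> and \<open>y\<close> in every prefix therefore differ by at most \<open>d\<close>. The prefix ending at the \<open>i\<close>-th
  \<open>y\<close> contains at least \<open>i - d\<close> occurrences of \<open>x\<close>, and the prefix ending at the \<open>(i + d)\<close>-th \<open>x\<close>
  contains at least \<open>i\<close> occurrences of \<open>y\<close>.\<close>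

lemma altpow_Suc_snoc: "altpow a b (Suc k) = altpow a b k @ [a, b]"
  by (simp add: altpow_def replicate_append_same[symmetric])

lemma count_list_prefix_altpow:
  assumes "u @ z = altpow a b k"
  shows "\<bar>int (count_list u a) - int (count_list u b)\<bar> \<le> 1"
  using assms
proof (induction k arbitrary: u)
  case 0
  then show ?case by (simp add: altpow_def)
next
  case (Suc k)
  then have "u @ z = a # b # altpow a b k" by (simp add: altpow_def)
  then consider "u = []" | "u = [a]" | u' where "u = a # b # u'" "u' @ z = altpow a b k"
    by (auto simp: append_eq_Cons_conv Cons_eq_append_conv)
  then show ?case
  proof cases
    case 3
    with Suc.IH[of u'] show ?thesis by auto
  qed auto
qed

lemma count_list_proj: "a \<in> S \<Longrightarrow> count_list (proj S u) a = count_list u a"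
  by (induction u) (auto simp: proj_def)

lemma alternate_imp_prefix_altpow:
  assumes "alternate w a b"
  shows "\<exists>k z. proj {a, b} w @ z = altpow a b k \<or> proj {a, b} w @ z = altpow b a k"
proof -
  from assms obtain k where
    "proj {a, b} w \<in> {altpow a b k, altpow a b k @ [a], altpow b a k, altpow b a k @ [b]}"
    unfolding alternate_def by blast
  then show ?thesis
    by (auto simp: altpow_Suc_snoc intro!: exI[of _ "Suc k"])
qed

lemma alternate_count_list_take:
  assumes "alternate w a b"
  shows "\<bar>int (count_list (take t w) a) - int (count_list (take t w) b)\<bar> \<le> 1"
proof -
  let ?u = "proj {a, b} (take t w)"
  have "proj {a, b} w = ?u @ proj {a, b} (drop t w)"
    by (metis append_take_drop_id filter_append proj_def)
  with alternate_imp_prefix_altpow[OF assms] obtain k z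
    where "?u @ z = altpow a b k \<or> ?u @ z = altpow b a k"
    by (metis append.assoc)
  then have "\<bar>int (count_list ?u a) - int (count_list ?u b)\<bar> \<le> 1"
    using count_list_prefix_altpow by fastforce
  then show ?thesis by (simp add: count_list_proj)
qed

lemma alt_walk_count_list_take:
  assumes "alt_walk \<Sigma> w x y n"
  shows "\<bar>int (count_list (take t w) x) - int (count_list (take t w) y)\<bar> \<le> int n"
proof -
  let ?c = "\<lambda>a. int (count_list (take t w) a)"
  from assms obtain ps where ps: "length ps = Suc n" "hd ps = x" "last ps = y"
    "\<forall>i<n. alt_edge \<Sigma> w (ps ! i) (ps ! Suc i)" unfolding alt_walk_def by blast
  have "\<bar>?c (ps ! 0) - ?c (ps ! k)\<bar> \<le> int k" if "k \<le> n" for k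
    using that
  proof (induction k)
    case (Suc k)
    then have "alternate w (ps ! k) (ps ! Suc k)" using ps(4) by (simp add: alt_edge_def)
    with Suc show ?case using alternate_count_list_take[of w "ps ! k" "ps ! Suc k" t] by auto
  qed simp
  moreover have "ps \<noteq> []" using ps(1) by auto
  then have "ps ! 0 = x" "ps ! n = y" using ps by (simp_all add: hd_conv_nth last_conv_nth)
  ultimately show ?thesis by fastforce
qed

lemma alt_walk_of_alt_dist: "alt_dist \<Sigma> w x y = enat d \<Longrightarrow> alt_walk \<Sigma> w x y d"
  unfolding alt_dist_def by (auto split: if_splits intro: LeastI_ex)

lemma count_list_take_occs: "count_list (take t w) x = length (filter (\<lambda>p. p < t) (occs w x))"
  unfolding count_list_eq_length_filter occs_def filter_filter length_filter_conv_card
  by (auto intro!: arg_cong[where f = card])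

lemma sorted_nth_less_iff_length_filter:
  fixes L :: "'a::linorder list"
  assumes "sorted L" "j < length L"
  shows "L ! j < t \<longleftrightarrow> j < length (filter (\<lambda>p. p < t) L)"
  using assms
proof (induction L arbitrary: j)
  case (Cons a L)
  show ?case
  proof (cases "a < t")
    case True
    with Cons show ?thesis by (cases j) auto
  next
    case False
    with Cons.prems have "\<forall>p \<in> set (a # L). \<not> p < t"
      by (auto simp: not_less intro: order_trans)
    moreover have "(a # L) ! j \<in> set (a # L)" using Cons.prems(2) by (rule nth_mem)
    ultimately show ?thesis by (metis filter_empty_conv length_0_conv not_less_zero)
  qed
qed simp

lemma occs_nth_less_iff:
  assumes "j < length (occs w x)"
  shows "occs w x ! j < t \<longleftrightarrow> j < count_list (take t w) x"
proof -
  have "sorted (occs w x)" by (simp add: occs_def sorted_filter[where f = id, simplified])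
  with assms show ?thesis by (simp add: count_list_take_occs sorted_nth_less_iff_length_filter)
qed

theorem lemma7:
  fixes \<Sigma> :: "'a set" and w :: "'a list" and x y :: 'a and d i :: nat
  assumes "set w \<subseteq> \<Sigma>" and "x \<in> \<Sigma>" and "y \<in> \<Sigma>"
    and "alt_dist \<Sigma> w x y = enat d"
    and "1 \<le> i" and "i \<le> length (occs w y)"
  shows "(d < i \<and> i - d \<le> length (occs w x) \<longrightarrow>
            occs w x ! (i - d - 1) \<le> occs w y ! (i - 1))
       \<and> (i + d \<le> length (occs w x) \<longrightarrow>
            occs w y ! (i - 1) \<le> occs w x ! (i + d - 1))"
proof -
  have diff: "\<bar>int (count_list (take t w) x) - int (count_list (take t w) y)\<bar> \<le> int d" for t
    using alt_walk_count_list_take[OF alt_walk_of_alt_dist[OF assms(4)]] .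
  show ?thesis
  proof (intro conjI impI)
    assume x_exists: "d < i \<and> i - d \<le> length (occs w x)"
    let ?t = "Suc (occs w y ! (i - 1))"
    have "i - 1 < length (occs w y)" using assms(5,6) by linarith
    from occs_nth_less_iff[OF this, of ?t] have "i - 1 < count_list (take ?t w) y" by blast
    then have "i - d - 1 < count_list (take ?t w) x" using diff[of ?t] x_exists by linarith
    moreover have "i - d - 1 < length (occs w x)" using x_exists by linarith
    ultimately have "occs w x ! (i - d - 1) < ?t" by (simp only: occs_nth_less_iff)
    then show "occs w x ! (i - d - 1) \<le> occs w y ! (i - 1)" by simp
  next
    assume x_exists: "i + d \<le> length (occs w x)"
    let ?t = "Suc (occs w x ! (i + d - 1))"
    have "i + d - 1 < length (occs w x)" using assms(5) x_exists by linarith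
    from occs_nth_less_iff[OF this, of ?t] have "i + d - 1 < count_list (take ?t w) x" by blast
    then have "i - 1 < count_list (take ?t w) y" using diff[of ?t] assms(5) by linarith
    moreover have "i - 1 < length (occs w y)" using assms(5,6) by linarith
    ultimately have "occs w y ! (i - 1) < ?t" by (simp only: occs_nth_less_iff)
    then show "occs w y ! (i - 1) \<le> occs w x ! (i + d - 1)" by simp
  qed
qed

end
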